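(* Let $v_1,\ldots,v_n$ be integers with $v_i\geq 2$, let $Q$ be the $n\times n$ tridiagonal matrix with $Q_{ii}=-v_i$, $Q_{i,i+1}=Q_{i+1,i}=1$ and all other entries $0$, and let $f:\mathbb{R}^n\to\mathbb{R}$, $f(z)=z^TQ^{-1}z$. Let $y=(-v_1+2,\ldots,-v_n+2)$. Then for every $x\in\mathbb{R}^n$ with $|x_i|\leq|y_i|$ for all $i$ and $|x_{i_0}|<|y_{i_0}|$ for at least one index $i_0$, we have $f(x)>f(y)$.
   Context: In the paper $y$ is the vector of rotation numbers of a Legendrian chain of unknots giving a universally tight structure on $L(p,q)$ with $-p/q=[-v_1,\ldots,-v_n]$, and $x$ ranges over rotation vectors of virtually overtwisted structures; the statement above is the purely algebraic content. *)

theory Defs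
  imports "Jordan_Normal_Form.Matrix"
begin

text \<open>Indices are 0-based: entry i of the paper corresponds to index i-1 here.
  Q is the n x n tridiagonal matrix with diagonal -v_i and 1 on the off-diagonals.\<close>
definition tridiag_Q :: "nat \<Rightarrow> (nat \<Rightarrow> int) \<Rightarrow> real mat" where
  "tridiag_Q n v = mat n n (\<lambda>(i, j).
      if i = j then - real_of_int (v i)
      else if j = i + 1 \<or> i = j + 1 then 1 else 0)"

definition mat_inv :: "nat \<Rightarrow> real mat \<Rightarrow> real mat" where
  "mat_inv n A = (THE B. B \<in> carrier_mat n n \<and> inverts_mat A B \<and> inverts_mat B A)"

definition qf :: "nat \<Rightarrow> (nat \<Rightarrow> int) \<Rightarrow> real vec \<Rightarrow> real" where
  "qf n v z = z \<bullet> (mat_inv n (tridiag_Q n v) *\<^sub>v z)"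

definition yvec :: "nat \<Rightarrow> (nat \<Rightarrow> int) \<Rightarrow> real vec" where
  "yvec n v = vec n (\<lambda>i. - real_of_int (v i) + 2)"

end

(* Q is symmetric, has nonnegative off-diagonal entries, and is negative definite:
   -z^T Q z = sum (v_i - 2) z_i^2 + z_1^2 + z_n^2 + sum (z_i - z_(i+1))^2.
   Write x = Q w and y = Q u, so that f x = w^T Q w and f y = u^T Q u, and put a = |w|
   componentwise. Expanding (u - a)^T Q (u - a) <= 0 gives f y <= 2 a^T y - a^T Q a.
   Nonnegativity off the diagonal gives a^T Q a >= w^T Q w, and y <= 0 with |x| <= |y| gives
   a^T y <= w^T x = f x; hence f y <= f x. The inequality is strict: if w_i0 <> 0 then
   a^T y < w^T x, and if w_i0 = 0 then (Q a)_i0 >= 0 > y_i0, so u <> a and the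
   negative definite term is negative. *)

theory Submission
  imports Defs "Jordan_Normal_Form.Determinant"
begin

definition metzler_mat :: "'a :: {zero, ord} mat \<Rightarrow> bool" where
  "metzler_mat A \<longleftrightarrow> (\<forall>i < dim_row A. \<forall>j < dim_col A. i \<noteq> j \<longrightarrow> 0 \<le> A $$ (i, j))"

definition negative_definite :: "real mat \<Rightarrow> bool" where
  "negative_definite A \<longleftrightarrow>
     (\<forall>z \<in> carrier_vec (dim_col A). z \<noteq> 0\<^sub>v (dim_col A) \<longrightarrow> z \<bullet> (A *\<^sub>v z) < 0)"

lemma scalar_prod_mult_mat_vec_eq_double_sum:
  fixes A :: "'a :: comm_semiring_0 mat"
  assumes "A \<in> carrier_mat n n" and "z \<in> carrier_vec n"
  shows "z \<bullet> (A *\<^sub>v z) = (\<Sum>i<n. \<Sum>j<n. z $ i * A $$ (i, j) * z $ j)"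
  using assms
  by (simp add: scalar_prod_def mult_mat_vec_def row_def sum_distrib_left mult.assoc atLeast0LessThan)

lemma metzler_quadratic_form_le_abs:
  fixes A :: "'a :: linordered_idom mat"
  assumes A: "A \<in> carrier_mat n n" and "metzler_mat A" and z: "z \<in> carrier_vec n"
  shows "z \<bullet> (A *\<^sub>v z) \<le> map_vec abs z \<bullet> (A *\<^sub>v map_vec abs z)"
proof -
  have "z $ i * A $$ (i, j) * z $ j \<le> \<bar>z $ i\<bar> * A $$ (i, j) * \<bar>z $ j\<bar>"
    if "i < n" "j < n" for i j
  proof (cases "i = j")
    case True
    then show ?thesis by (simp add: mult.commute mult.left_commute)
  next
    case False
    with assms that have "0 \<le> A $$ (i, j)" by (auto simp: metzler_mat_def)
    then show ?thesis
      by (metis abs_ge_self abs_mult abs_of_nonneg mult.commute)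
  qed
  then show ?thesis
    using A z by (auto simp: scalar_prod_mult_mat_vec_eq_double_sum intro!: sum_mono)
qed

lemma metzler_mult_vec_nonneg_at_zero:
  fixes A :: "'a :: linordered_idom mat"
  assumes A: "A \<in> carrier_mat n n" and "metzler_mat A" and z: "z \<in> carrier_vec n"
    and "\<forall>j<n. 0 \<le> z $ j" and "i < n" and "z $ i = 0"
  shows "0 \<le> (A *\<^sub>v z) $ i"
proof -
  have "0 \<le> A $$ (i, j) * z $ j" if "j < n" for j
    using assms that by (cases "i = j") (auto simp: metzler_mat_def)
  then show ?thesis
    using assms by (auto simp: scalar_prod_def row_def intro!: sum_nonneg)
qed

lemma symmetric_quadratic_form_diff:
  fixes A :: "'a :: comm_ring_1 mat"
  assumes A: "A \<in> carrier_mat n n" and sym: "transpose_mat A = A"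
    and u: "u \<in> carrier_vec n" and a: "a \<in> carrier_vec n"
  shows "(u - a) \<bullet> (A *\<^sub>v (u - a)) = u \<bullet> (A *\<^sub>v u) - 2 * (a \<bullet> (A *\<^sub>v u)) + a \<bullet> (A *\<^sub>v a)"
proof -
  have "u \<bullet> (A *\<^sub>v a) = a \<bullet> (A *\<^sub>v u)"
    using transpose_vec_mult_scalar[OF A a u] comm_scalar_prod[OF _ a, of "A *\<^sub>v u"] A u sym
    by simp
  then show ?thesis
    using A u a
    by (simp add: minus_scalar_prod_distrib[of _ n]
        scalar_prod_minus_distrib[of _ n] algebra_simps)
qed

lemma negative_definiteD:
  assumes "negative_definite A" and "A \<in> carrier_mat n n"
    and "z \<in> carrier_vec n" and "z \<noteq> 0\<^sub>v n"
  shows "z \<bullet> (A *\<^sub>v z) < 0"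
  using assms by (auto simp: negative_definite_def)

lemma negative_definite_quadratic_form_nonpos:
  assumes "negative_definite A" and A: "A \<in> carrier_mat n n" and z: "z \<in> carrier_vec n"
  shows "z \<bullet> (A *\<^sub>v z) \<le> 0"
  using negative_definiteD[OF assms] A by (cases "z = 0\<^sub>v n") auto

lemma abs_mult_nonpos_le:
  fixes w x y :: "'a :: linordered_idom"
  assumes "y \<le> 0" and "\<bar>x\<bar> \<le> \<bar>y\<bar>"
  shows "\<bar>w\<bar> * y \<le> w * x"
proof -
  have "\<bar>w\<bar> * \<bar>x\<bar> \<le> \<bar>w\<bar> * - y" using assms by (intro mult_left_mono) auto
  moreover have "- \<bar>w * x\<bar> \<le> w * x" by simp
  ultimately show ?thesis by (simp add: abs_mult)
qed

lemma abs_mult_nonpos_less: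
  fixes w x y :: "'a :: linordered_idom"
  assumes "y \<le> 0" and "\<bar>x\<bar> < \<bar>y\<bar>" and "w \<noteq> 0"
  shows "\<bar>w\<bar> * y < w * x"
proof -
  have "\<bar>w\<bar> * \<bar>x\<bar> < \<bar>w\<bar> * - y" using assms by (intro mult_strict_left_mono) auto
  moreover have "- \<bar>w * x\<bar> \<le> w * x" by simp
  ultimately show ?thesis by (simp add: abs_mult)
qed

lemma abs_scalar_prod_nonpos_le:
  fixes w x y :: "'a :: linordered_idom vec"
  assumes "w \<in> carrier_vec n" "x \<in> carrier_vec n" "y \<in> carrier_vec n"
    and "\<forall>i<n. y $ i \<le> 0" and "\<forall>i<n. \<bar>x $ i\<bar> \<le> \<bar>y $ i\<bar>"
  shows "map_vec abs w \<bullet> y \<le> w \<bullet> x"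
  using assms by (auto simp: scalar_prod_def abs_mult_nonpos_le intro!: sum_mono)

lemma abs_scalar_prod_nonpos_less:
  fixes w x y :: "'a :: linordered_idom vec"
  assumes "w \<in> carrier_vec n" "x \<in> carrier_vec n" "y \<in> carrier_vec n"
    and "\<forall>i<n. y $ i \<le> 0" and "\<forall>i<n. \<bar>x $ i\<bar> \<le> \<bar>y $ i\<bar>"
    and "i0 < n" and "\<bar>x $ i0\<bar> < \<bar>y $ i0\<bar>" and "w $ i0 \<noteq> 0"
  shows "map_vec abs w \<bullet> y < w \<bullet> x"
  using assms unfolding scalar_prod_def
  by (auto intro!: sum_strict_mono_ex1 abs_mult_nonpos_le abs_mult_nonpos_less)

lemma metzler_negative_definite_quadratic_form_less:
  fixes A :: "real mat"
  assumes A: "A \<in> carrier_mat n n" and sym: "transpose_mat A = A"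
    and metzler: "metzler_mat A" and neg_def: "negative_definite A"
    and w: "w \<in> carrier_vec n" and u: "u \<in> carrier_vec n"
    and nonpos: "\<forall>i<n. (A *\<^sub>v u) $ i \<le> 0"
    and le: "\<forall>i<n. \<bar>(A *\<^sub>v w) $ i\<bar> \<le> \<bar>(A *\<^sub>v u) $ i\<bar>"
    and i0: "i0 < n" "\<bar>(A *\<^sub>v w) $ i0\<bar> < \<bar>(A *\<^sub>v u) $ i0\<bar>"
  shows "u \<bullet> (A *\<^sub>v u) < w \<bullet> (A *\<^sub>v w)"
proof -
  define a where "a = map_vec abs w"
  have a: "a \<in> carrier_vec n" using w by (simp add: a_def)
  have expand: "(u - a) \<bullet> (A *\<^sub>v (u - a))
      = u \<bullet> (A *\<^sub>v u) - 2 * (a \<bullet> (A *\<^sub>v u)) + a \<bullet> (A *\<^sub>v a)"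
    by (rule symmetric_quadratic_form_diff[OF A sym u a])
  have abs_le: "w \<bullet> (A *\<^sub>v w) \<le> a \<bullet> (A *\<^sub>v a)"
    unfolding a_def by (rule metzler_quadratic_form_le_abs[OF A metzler w])
  have pair_le: "a \<bullet> (A *\<^sub>v u) \<le> w \<bullet> (A *\<^sub>v w)"
    unfolding a_def using A w u nonpos le by (intro abs_scalar_prod_nonpos_le) auto
  have diff_le: "(u - a) \<bullet> (A *\<^sub>v (u - a)) \<le> 0"
    using negative_definite_quadratic_form_nonpos[OF neg_def A] u a by simp
  show ?thesis
  proof (cases "w $ i0 = 0")
    case False
    then have "a \<bullet> (A *\<^sub>v u) < w \<bullet> (A *\<^sub>v w)"
      unfolding a_def using A w u nonpos le i0 by (intro abs_scalar_prod_nonpos_less) auto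
    then show ?thesis using expand abs_le diff_le by linarith
  next
    case True
    have "u \<noteq> a"
    proof
      assume "u = a"
      then have "0 \<le> (A *\<^sub>v u) $ i0"
        using metzler_mult_vec_nonneg_at_zero[OF A metzler a] w i0 True by (simp add: a_def)
      then show False using nonpos i0 by auto
    qed
    then have "u - a \<noteq> 0\<^sub>v n" using u a by (auto simp: vec_eq_iff)
    then have "(u - a) \<bullet> (A *\<^sub>v (u - a)) < 0"
      using negative_definiteD[OF neg_def A] u a by simp
    then show ?thesis using expand abs_le pair_le by linarith
  qed
qed

lemma mat_inv_eqI:
  assumes A: "A \<in> carrier_mat n n" and B: "B \<in> carrier_mat n n" and AB: "A * B = 1\<^sub>m n"
  shows "mat_inv n A = B"
  unfolding mat_inv_def
proof (rule the_equality)
  show "B \<in> carrier_mat n n \<and> inverts_mat A B \<and> inverts_mat B A"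
    using A B AB mat_mult_left_right_inverse[OF A B AB] by (simp add: inverts_mat_def)
next
  fix B' assume "B' \<in> carrier_mat n n \<and> inverts_mat A B' \<and> inverts_mat B' A"
  then have B': "B' \<in> carrier_mat n n" and B'A: "B' * A = 1\<^sub>m n"
    using A by (auto simp: inverts_mat_def)
  have "B' = B' * (A * B)" using B' AB by simp
  also have "\<dots> = (B' * A) * B" using B' A B by simp
  also have "\<dots> = B" using B'A B by simp
  finally show "B' = B" .
qed

lemma negative_definite_mat_inv:
  assumes A: "A \<in> carrier_mat n n" and neg_def: "negative_definite A"
  shows "mat_inv n A \<in> carrier_mat n n" and "A * mat_inv n A = 1\<^sub>m n"
proof -
  have "det A \<noteq> 0"
  proof
    assume "det A = 0"
    then obtain z where "z \<in> carrier_vec n" "z \<noteq> 0\<^sub>v n" "A *\<^sub>v z = 0\<^sub>v n"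
      using det_0_iff_vec_prod_zero_field[OF A] by blast
    then show False using negative_definiteD[OF neg_def A] by fastforce
  qed
  then obtain B where B: "B \<in> carrier_mat n n" and AB: "A * B = 1\<^sub>m n"
    using det_non_zero_imp_unit[OF A, of "()"] by (auto simp: Units_def ring_mat_def)
  show "mat_inv n A \<in> carrier_mat n n" and "A * mat_inv n A = 1\<^sub>m n"
    using mat_inv_eqI[OF A B AB] B AB by simp_all
qed

lemma metzler_negative_definite_mat_inv_form_less:
  fixes A :: "real mat"
  assumes A: "A \<in> carrier_mat n n" and sym: "transpose_mat A = A"
    and metzler: "metzler_mat A" and neg_def: "negative_definite A"
    and x: "x \<in> carrier_vec n" and y: "y \<in> carrier_vec n"
    and nonpos: "\<forall>i<n. y $ i \<le> 0"
    and le: "\<forall>i<n. \<bar>x $ i\<bar> \<le> \<bar>y $ i\<bar>" and less: "\<exists>i0<n. \<bar>x $ i0\<bar> < \<bar>y $ i0\<bar>"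
  shows "y \<bullet> (mat_inv n A *\<^sub>v y) < x \<bullet> (mat_inv n A *\<^sub>v x)"
proof -
  let ?B = "mat_inv n A"
  have B: "?B \<in> carrier_mat n n" and AB: "A * ?B = 1\<^sub>m n"
    using negative_definite_mat_inv[OF A neg_def] by simp_all
  have A_B: "A *\<^sub>v (?B *\<^sub>v z) = z" if "z \<in> carrier_vec n" for z
    using that A B AB by (simp flip: assoc_mult_mat_vec)
  have form: "z \<bullet> (?B *\<^sub>v z) = (?B *\<^sub>v z) \<bullet> (A *\<^sub>v (?B *\<^sub>v z))" if "z \<in> carrier_vec n" for z
    using that B by (simp add: A_B comm_scalar_prod[of z n])
  obtain i0 where "i0 < n" "\<bar>x $ i0\<bar> < \<bar>y $ i0\<bar>" using less by blast
  then show ?thesis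
    unfolding form[OF x] form[OF y]
    using metzler_negative_definite_quadratic_form_less[OF A sym metzler neg_def, of "?B *\<^sub>v x" "?B *\<^sub>v y"]
      x y B nonpos le by (simp add: A_B)
qed

lemma tridiag_Q_carrier: "tridiag_Q n v \<in> carrier_mat n n"
  by (simp add: tridiag_Q_def)

lemma transpose_tridiag_Q: "transpose_mat (tridiag_Q n v) = tridiag_Q n v"
  by (rule eq_matI) (auto simp: tridiag_Q_def)

lemma metzler_tridiag_Q: "metzler_mat (tridiag_Q n v)"
  by (simp add: metzler_mat_def tridiag_Q_def)

lemma sum_if_Suc_less:
  "(\<Sum>i<n. if Suc i < n then f i else 0) = (\<Sum>i<n - 1. f i :: 'a :: comm_monoid_add)"
  by (cases n) simp_all

lemma tridiag_Q_quadratic_form: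
  assumes z: "z \<in> carrier_vec n"
  shows "z \<bullet> (tridiag_Q n v *\<^sub>v z)
    = - (\<Sum>i<n. real_of_int (v i) * (z $ i)\<^sup>2) + 2 * (\<Sum>i<n - 1. z $ i * z $ Suc i)"
proof -
  have entry: "z $ i * tridiag_Q n v $$ (i, j) * z $ j
      = (if j = i then - real_of_int (v i) * (z $ i)\<^sup>2 else 0)
        + (if j = Suc i then z $ i * z $ j else 0) + (if i = Suc j then z $ i * z $ j else 0)"
    if "i < n" "j < n" for i j
    using that by (auto simp: tridiag_Q_def power2_eq_square)
  have "z \<bullet> (tridiag_Q n v *\<^sub>v z)
      = (\<Sum>i<n. - real_of_int (v i) * (z $ i)\<^sup>2)
        + (\<Sum>i<n. if Suc i < n then z $ i * z $ Suc i else 0)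
        + (\<Sum>j<n. if Suc j < n then z $ Suc j * z $ j else 0)"
    using z
    by (simp add: scalar_prod_mult_mat_vec_eq_double_sum[OF tridiag_Q_carrier] entry sum.distrib
        sum_subtractf sum_negf sum.swap[of _ "{..<n}" "{..<n}"])
  then show ?thesis
    by (simp add: sum_if_Suc_less sum_negf mult.commute sum.distrib)
qed

lemma sum_squares_minus_adjacent_products:
  fixes f :: "nat \<Rightarrow> 'a :: comm_ring_1"
  shows "2 * (\<Sum>i<Suc m. (f i)\<^sup>2) - 2 * (\<Sum>i<m. f i * f (Suc i))
    = (f 0)\<^sup>2 + (f m)\<^sup>2 + (\<Sum>i<m. (f i - f (Suc i))\<^sup>2)"
  by (induction m) (simp_all add: power2_eq_square algebra_simps)

lemma sum_squares_differences_pos: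
  fixes f :: "nat \<Rightarrow> real"
  assumes "k \<le> m" and "f k \<noteq> 0"
  shows "0 < (f 0)\<^sup>2 + (\<Sum>i<m. (f i - f (Suc i))\<^sup>2)"
proof (rule ccontr)
  assume "\<not> ?thesis"
  moreover have "0 \<le> (\<Sum>i<m. (f i - f (Suc i))\<^sup>2)" by (simp add: sum_nonneg)
  ultimately have "f 0 = 0" and "(\<Sum>i<m. (f i - f (Suc i))\<^sup>2) = 0"
    by (smt (verit) zero_le_power2 power_eq_0_iff)+
  then have "f 0 = 0" and "\<forall>i<m. f (Suc i) = f i"
    by (simp_all add: sum_nonneg_eq_0_iff)
  then have "f i = 0" if "i \<le> m" for i
    using that by (induction i) auto
  with assms show False by blast
qed

lemma negative_definite_tridiag_Q:
  assumes v: "\<forall>i<n. v i \<ge> 2"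
  shows "negative_definite (tridiag_Q n v)"
  unfolding negative_definite_def
proof (intro ballI impI)
  fix z :: "real vec"
  assume "z \<in> carrier_vec (dim_col (tridiag_Q n v))" and "z \<noteq> 0\<^sub>v (dim_col (tridiag_Q n v))"
  then have z: "z \<in> carrier_vec n" and "z \<noteq> 0\<^sub>v n" by (simp_all add: tridiag_Q_def)
  then obtain k where k: "k < n" "z $ k \<noteq> 0" by (auto simp: vec_eq_iff)
  then obtain m where n: "n = Suc m" by (cases n) auto
  have "z \<bullet> (tridiag_Q n v *\<^sub>v z)
      = - (\<Sum>i<n. (real_of_int (v i) - 2) * (z $ i)\<^sup>2)
        - (2 * (\<Sum>i<Suc m. (z $ i)\<^sup>2) - 2 * (\<Sum>i<m. z $ i * z $ Suc i))"
    unfolding tridiag_Q_quadratic_form[OF z]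
    by (simp add: n algebra_simps sum_subtractf sum_distrib_left)
  also have "\<dots> = - (\<Sum>i<n. (real_of_int (v i) - 2) * (z $ i)\<^sup>2)
      - ((z $ 0)\<^sup>2 + (z $ m)\<^sup>2 + (\<Sum>i<m. (z $ i - z $ Suc i)\<^sup>2))"
    by (simp only: sum_squares_minus_adjacent_products)
  also have "\<dots> < 0"
  proof -
    have "0 \<le> (\<Sum>i<n. (real_of_int (v i) - 2) * (z $ i)\<^sup>2)"
      using v by (intro sum_nonneg) auto
    moreover have "0 < (z $ 0)\<^sup>2 + (\<Sum>i<m. (z $ i - z $ Suc i)\<^sup>2)"
      using sum_squares_differences_pos[of k m "\<lambda>i. z $ i"] k n by simp
    ultimately show ?thesis by (smt (verit) zero_le_power2)
  qed
  finally show "z \<bullet> (tridiag_Q n v *\<^sub>v z) < 0" .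
qed

theorem proposition3p3:
  fixes n :: nat and v :: "nat \<Rightarrow> int" and x :: "real vec"
  assumes "\<forall>i<n. v i \<ge> 2"
    and "x \<in> carrier_vec n"
    and "\<forall>i<n. \<bar>x $ i\<bar> \<le> \<bar>yvec n v $ i\<bar>"
    and "\<exists>i0<n. \<bar>x $ i0\<bar> < \<bar>yvec n v $ i0\<bar>"
  shows "qf n v x > qf n v (yvec n v)"
proof -
  have "yvec n v \<in> carrier_vec n" by (simp add: yvec_def)
  moreover have "\<forall>i<n. yvec n v $ i \<le> 0" using assms(1) by (simp add: yvec_def)
  ultimately show ?thesis
    unfolding qf_def
    using metzler_negative_definite_mat_inv_form_less[OF tridiag_Q_carrier transpose_tridiag_Q
        metzler_tridiag_Q negative_definite_tridiag_Q[OF assms(1)] assms(2) _ _ assms(3,4)]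
    by simp
qed

end
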